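(* Let $\Omega\subset\mathbb C^n$ be a bounded open convex set with $C^1$ boundary and $C^1$ defining function $\rho$ (so $\Omega=\{\rho<0\}$ near $\partial\Omega$ and $\nabla\rho\ne0$ on $\partial\Omega$). For $\zeta\in\partial\Omega$ let $$f_\zeta(z)=\frac{1}{\sum_{j=1}^n\frac{\partial\rho}{\partial\zeta_j}(\zeta)(\zeta_j-z_j)},\quad z\in\Omega.$$ Then $f_\zeta$ is holomorphic on $\Omega$, $f_\zeta\in\bigcap_{p<2}\mathcal{O}L^p(\Omega)$, $f_\zeta\notin\mathcal{O}L^\infty(\Omega)$, and (with the principal branch of $\log$) $\log f_\zeta\in\bigcap_{p<\infty}\mathcal{O}L^p(\Omega)$ while $\log f_\zeta\notin\mathcal{O}L^\infty(\Omega)$.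
   Context: For a bounded open set $D$ and $p\ge1$, $\mathcal{O}L^p(D)$ is the set of holomorphic $f$ on $D$ with $\int_D|f|^p\,dv<\infty$; $\mathcal{O}L^\infty(D)$ is the set of bounded holomorphic functions on $D$. *)

theory Defs
  imports "HOL-Analysis.Analysis"
begin

text \<open>Points of C^n are vectors of type complex^'n. A function is holomorphic on D
  if at every point of D it is (real-)Frechet differentiable with a complex-linear
  derivative h \<mapsto> sum_j a_j h_j.\<close>
definition holo_n :: "(complex^'n) set \<Rightarrow> (complex^'n \<Rightarrow> complex) \<Rightarrow> bool" where
  "holo_n D f \<longleftrightarrow> (\<forall>z\<in>D. \<exists>a::complex^'n.
      (f has_derivative (\<lambda>h. \<Sum>j\<in>UNIV. a$j * h$j)) (at z))"

definition OL :: "real \<Rightarrow> (complex^'n) set \<Rightarrow> (complex^'n \<Rightarrow> complex) set" where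
  "OL p D = {f. holo_n D f \<and> set_integrable lborel D (\<lambda>z. norm (f z) powr p)}"

definition OL_inf :: "(complex^'n) set \<Rightarrow> (complex^'n \<Rightarrow> complex) set" where
  "OL_inf D = {f. holo_n D f \<and> bounded (f ` D)}"

text \<open>Wirtinger derivative d rho / d zeta_j at a point, computed from the real
  Frechet derivative D of rho: (D(e_j) - i D(i e_j)) / 2.\<close>
definition wirtinger :: "(complex^'n \<Rightarrow> real) \<Rightarrow> 'n \<Rightarrow> complex" where
  "wirtinger D j = (complex_of_real (D (axis j 1)) - \<i> * complex_of_real (D (axis j \<i>))) / 2"

definition f_zeta :: "((complex^'n) \<Rightarrow>\<^sub>L real) \<Rightarrow> complex^'n \<Rightarrow> complex^'n \<Rightarrow> complex" where
  "f_zeta D \<zeta> z = 1 / (\<Sum>j\<in>UNIV. wirtinger (blinfun_apply D) j * (\<zeta>$j - z$j))"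

end

theory Submission imports Defs begin

text \<open>With \<open>\<ell>(z) = \<Sum>\<^sub>j \<partial>\<rho>/\<partial>\<zeta>\<^sub>j(\<zeta>) (\<zeta>\<^sub>j - z\<^sub>j)\<close> we have \<open>f\<^sub>\<zeta> = 1/\<ell>\<close> and \<open>2 Re \<ell>(z) = -D\<rho>(\<zeta>)(z - \<zeta>)\<close>.
  Convexity puts \<open>\<Omega>\<close> into the open half-space \<open>D\<rho>(\<zeta>)(z - \<zeta>) < 0\<close>, so \<open>Re \<ell> > 0\<close> on \<open>\<Omega>\<close>:
  \<open>f\<^sub>\<zeta>\<close> and \<open>Log f\<^sub>\<zeta>\<close> are holomorphic, and both blow up as \<open>z \<rightarrow> \<zeta>\<close> since \<open>\<ell>(\<zeta>) = 0\<close>.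
  Integrability only uses that \<open>\<ell>\<close> is a nonzero affine function: in real coordinates spanning
  one complex direction of \<open>\<ell>\<close>, the bound \<open>|w|\<^sup>2 \<ge> 2 |Re w| |Im w|\<close> dominates \<open>|\<ell>|\<^sup>-\<^sup>q\<close> by a
  product of the one-dimensional singularities \<open>|s|\<^sup>-\<^sup>q\<^sup>/\<^sup>2\<close> and \<open>|t|\<^sup>-\<^sup>q\<^sup>/\<^sup>2\<close>, integrable for \<open>q < 2\<close>.
  Finally \<open>|Log f\<^sub>\<zeta>| \<le> |ln |\<ell>|| + \<pi>\<close>, and \<open>(|ln x| + \<pi>)\<^sup>p\<close> is at most a constant plus a
  multiple of \<open>x\<^sup>-\<^sup>1\<close> on bounded \<open>x > 0\<close>, since \<open>-ln x \<le> p x\<^sup>-\<^sup>1\<^sup>/\<^sup>p\<close>.\<close>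

section \<open>One-dimensional singular integrals\<close>

text \<open>The value \<open>\<infinity>\<close> at \<open>0\<close> lets the product bound below hold also on the coordinate axes.\<close>
definition abs_powr_neg :: "real \<Rightarrow> real \<Rightarrow> ennreal" where
  "abs_powr_neg r s = (if s = 0 then \<infinity> else ennreal (\<bar>s\<bar> powr (-r)))"

lemma abs_powr_neg_measurable [measurable]: "abs_powr_neg r \<in> borel_measurable borel"
  unfolding abs_powr_neg_def by measurable

lemma nn_integral_abs_powr_neg_unit_finite:
  assumes "0 \<le> r" "r < 1"
  shows "(\<integral>\<^sup>+ v. indicator {-1..1} v * abs_powr_neg r v \<partial>lborel) < \<infinity>"
proof -
  define g where "g = (\<lambda>v::real. ennreal (indicator {0..1} v * v powr (-r)))"
  have [measurable]: "g \<in> borel_measurable borel" unfolding g_def by measurable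
  have g: "(\<integral>\<^sup>+ v. g v \<partial>lborel) = ennreal (1 / (1 - r))"
    using nn_integral_has_integral_lebesgue[OF _ has_integral_powr_from_0[of "-r" 1]] assms
    by (simp add: g_def)
  have g_reflect: "(\<integral>\<^sup>+ v. g (-v) \<partial>lborel) = ennreal (1 / (1 - r))"
    using nn_integral_real_affine[of g "-1" 0] g by simp
  have "(\<integral>\<^sup>+ v. indicator {-1..1} v * abs_powr_neg r v \<partial>lborel) = (\<integral>\<^sup>+ v. g v + g (-v) \<partial>lborel)"
  proof (rule nn_integral_cong_AE)
    show "AE v in lborel. indicator {-1..1} v * abs_powr_neg r v = g v + g (-v)"
      using AE_lborel_singleton[of "0::real"]
      by eventually_elim (auto simp: g_def abs_powr_neg_def indicator_def)
  qed
  also have "\<dots> = (\<integral>\<^sup>+ v. g v \<partial>lborel) + (\<integral>\<^sup>+ v. g (-v) \<partial>lborel)"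
    by (rule nn_integral_add) auto
  also have "\<dots> < \<infinity>"
    using g g_reflect by (simp add: ennreal_plus[symmetric] del: ennreal_plus)
  finally show ?thesis .
qed

lemma nn_integral_abs_powr_neg_shift_le:
  assumes "0 \<le> r" and "0 \<le> R"
  shows "(\<integral>\<^sup>+ y. indicator {-R..R} y * abs_powr_neg r (y - u) \<partial>lborel)
    \<le> (\<integral>\<^sup>+ v. indicator {-1..1} v * abs_powr_neg r v \<partial>lborel) + ennreal (2 * R)"
proof -
  define f where "f = (\<lambda>v. indicator {-1..1} v * abs_powr_neg r v)"
  have [measurable]: "f \<in> borel_measurable borel" unfolding f_def by measurable
  have "(\<integral>\<^sup>+ y. indicator {-R..R} y * abs_powr_neg r (y - u) \<partial>lborel)
      \<le> (\<integral>\<^sup>+ y. f (y - u) + indicator {-R..R} y \<partial>lborel)"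
  proof (rule nn_integral_mono)
    fix y
    show "indicator {-R..R} y * abs_powr_neg r (y - u) \<le> f (y - u) + indicator {-R..R} y"
    proof (cases "\<bar>y - u\<bar> \<le> 1")
      case False
      then have "\<bar>y - u\<bar> powr (-r) \<le> 1"
        using ge_one_powr_ge_zero[of "\<bar>y - u\<bar>" r] assms by (simp add: powr_minus inverse_le_1_iff)
      with False show ?thesis by (auto simp: f_def indicator_def abs_powr_neg_def)
    qed (auto simp: f_def indicator_def)
  qed
  also have "\<dots> = (\<integral>\<^sup>+ y. f (y - u) \<partial>lborel) + (\<integral>\<^sup>+ y. indicator {-R..R} y \<partial>lborel)"
    by (rule nn_integral_add) auto
  also have "(\<integral>\<^sup>+ y. f (y - u) \<partial>lborel) = (\<integral>\<^sup>+ y. f y \<partial>lborel)"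
    using nn_integral_real_affine[of "\<lambda>y. f (y - u)" 1 u] by simp
  finally show ?thesis using assms by (simp add: f_def)
qed

lemma norm_mult_powr_neg_le_abs_powr_neg:
  fixes l w :: complex
  assumes "l \<noteq> 0" and "0 \<le> q"
  shows "ennreal (cmod (l * w) powr (-q))
    \<le> ennreal (cmod l powr (-q) * 2 powr (-q/2)) * abs_powr_neg (q/2) (Re w) * abs_powr_neg (q/2) (Im w)"
proof (cases "Re w = 0 \<or> Im w = 0")
  case True
  have "0 < cmod l powr (-q) * 2 powr (-q/2)" using assms by simp
  moreover have "w = 0 \<or> abs_powr_neg (q/2) (Re w) * abs_powr_neg (q/2) (Im w) = \<infinity>"
    using True complex_eq_iff[of w 0] by (auto simp: abs_powr_neg_def ennreal_mult_top ennreal_top_mult)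
  ultimately show ?thesis by (auto simp: mult.assoc ennreal_mult_top)
next
  case False
  have "cmod w powr (-q) = ((Re w)\<^sup>2 + (Im w)\<^sup>2) powr (-q/2)"
    by (simp add: cmod_def powr_half_sqrt[symmetric] powr_powr)
  also have "\<dots> \<le> (2 * \<bar>Re w\<bar> * \<bar>Im w\<bar>) powr (-q/2)"
  proof (rule powr_mono2')
    show "2 * \<bar>Re w\<bar> * \<bar>Im w\<bar> \<le> (Re w)\<^sup>2 + (Im w)\<^sup>2"
      using sum_squares_bound[of "\<bar>Re w\<bar>" "\<bar>Im w\<bar>"] by (simp add: power2_abs)
  qed (use False assms in auto)
  also have "\<dots> = 2 powr (-q/2) * \<bar>Re w\<bar> powr (-(q/2)) * \<bar>Im w\<bar> powr (-(q/2))"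
    by (simp add: powr_mult)
  finally have "ennreal (cmod (l * w) powr (-q))
      \<le> ennreal (cmod l powr (-q) * 2 powr (-q/2) * \<bar>Re w\<bar> powr (-(q/2)) * \<bar>Im w\<bar> powr (-(q/2)))"
    by (intro ennreal_leI) (auto simp: norm_mult powr_mult mult.assoc intro: mult_left_mono)
  also have "\<dots> = ennreal (cmod l powr (-q) * 2 powr (-q/2)) * abs_powr_neg (q/2) (Re w) * abs_powr_neg (q/2) (Im w)"
    using False by (simp add: abs_powr_neg_def ennreal_mult)
  finally show ?thesis .
qed

section \<open>Integrability of a negative power of a real-linear form\<close>

lemma nn_integral_PiM_insert_abs_powr_neg_le:
  fixes F :: "('i \<Rightarrow> real) \<Rightarrow> ennreal" and c :: "('i \<Rightarrow> real) \<Rightarrow> real"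
  assumes "finite I" "i \<notin> I" "0 \<le> r" "0 \<le> R"
    and [measurable]: "F \<in> borel_measurable (PiM (insert i I) (\<lambda>_. lborel))"
      "c \<in> borel_measurable (PiM (insert i I) (\<lambda>_. lborel))"
    and F_indep: "\<And>x y. F (x(i := y)) = F x" and c_indep: "\<And>x y. c (x(i := y)) = c x"
    and K: "(\<integral>\<^sup>+ v. indicator {-1..1} v * abs_powr_neg r v \<partial>lborel) + ennreal (2 * R) \<le> K"
  shows "(\<integral>\<^sup>+ x. F x * (indicator {-R..R} (x i) * abs_powr_neg r (x i - c x)) \<partial>PiM (insert i I) (\<lambda>_. lborel))
    \<le> (\<integral>\<^sup>+ x. F x * K \<partial>PiM I (\<lambda>_. lborel))"
proof -
  interpret product_sigma_finite "\<lambda>_::'i. lborel::real measure" by standard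
  have "(\<integral>\<^sup>+ x. F x * (indicator {-R..R} (x i) * abs_powr_neg r (x i - c x)) \<partial>PiM (insert i I) (\<lambda>_. lborel))
      = (\<integral>\<^sup>+ x. \<integral>\<^sup>+ y. F x * (indicator {-R..R} y * abs_powr_neg r (y - c x)) \<partial>lborel \<partial>PiM I (\<lambda>_. lborel))"
    using assms by (subst product_nn_integral_insert) (auto simp: F_indep c_indep)
  also have "\<dots> \<le> (\<integral>\<^sup>+ x. F x * K \<partial>PiM I (\<lambda>_. lborel))"
  proof (rule nn_integral_mono)
    fix x
    have "(\<integral>\<^sup>+ y. F x * (indicator {-R..R} y * abs_powr_neg r (y - c x)) \<partial>lborel)
        = F x * (\<integral>\<^sup>+ y. indicator {-R..R} y * abs_powr_neg r (y - c x) \<partial>lborel)"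
      by (rule nn_integral_cmult) auto
    also have "\<dots> \<le> F x * K"
      using assms by (intro mult_left_mono order.trans[OF nn_integral_abs_powr_neg_shift_le K]) auto
    finally show "(\<integral>\<^sup>+ y. F x * (indicator {-R..R} y * abs_powr_neg r (y - c x)) \<partial>lborel) \<le> F x * K" .
  qed
  finally show ?thesis .
qed

lemma nn_integral_PiM_insert2_abs_powr_neg_le:
  fixes G :: "('i \<Rightarrow> real) \<Rightarrow> ennreal" and \<gamma> :: "('i \<Rightarrow> real) \<Rightarrow> complex"
  assumes J: "finite J" "b1 \<notin> insert b2 J" "b2 \<notin> J" and "0 \<le> r" "0 \<le> R"
    and G_m: "\<And>I. J \<subseteq> I \<Longrightarrow> G \<in> borel_measurable (PiM I (\<lambda>_. lborel))"
    and \<gamma>_m: "\<And>I. J \<subseteq> I \<Longrightarrow> \<gamma> \<in> borel_measurable (PiM I (\<lambda>_. lborel))"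
    and upd: "\<And>f b y. b \<notin> J \<Longrightarrow> G (f(b := y)) = G f" "\<And>f b y. b \<notin> J \<Longrightarrow> \<gamma> (f(b := y)) = \<gamma> f"
    and K: "(\<integral>\<^sup>+ v. indicator {-1..1} v * abs_powr_neg r v \<partial>lborel) + ennreal (2 * R) \<le> K"
  shows "(\<integral>\<^sup>+ f. (G f * (indicator {-R..R} (f b2) * abs_powr_neg r (f b2 - Im (\<gamma> f)))) *
        (indicator {-R..R} (f b1) * abs_powr_neg r (f b1 - Re (\<gamma> f))) \<partial>PiM (insert b1 (insert b2 J)) (\<lambda>_. lborel))
    \<le> (\<integral>\<^sup>+ f. G f * K * K \<partial>PiM J (\<lambda>_. lborel))"
proof -
  have [measurable]: "G \<in> borel_measurable (PiM (insert b1 (insert b2 J)) (\<lambda>_. lborel))"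
    "G \<in> borel_measurable (PiM (insert b2 J) (\<lambda>_. lborel))"
    "\<gamma> \<in> borel_measurable (PiM (insert b1 (insert b2 J)) (\<lambda>_. lborel))"
    "\<gamma> \<in> borel_measurable (PiM (insert b2 J) (\<lambda>_. lborel))"
    by (auto intro: G_m \<gamma>_m)
  have "(\<integral>\<^sup>+ f. (G f * (indicator {-R..R} (f b2) * abs_powr_neg r (f b2 - Im (\<gamma> f)))) *
        (indicator {-R..R} (f b1) * abs_powr_neg r (f b1 - Re (\<gamma> f))) \<partial>PiM (insert b1 (insert b2 J)) (\<lambda>_. lborel))
      \<le> (\<integral>\<^sup>+ f. (G f * (indicator {-R..R} (f b2) * abs_powr_neg r (f b2 - Im (\<gamma> f)))) * K
        \<partial>PiM (insert b2 J) (\<lambda>_. lborel))"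
  proof (rule nn_integral_PiM_insert_abs_powr_neg_le)
    show "(\<lambda>f. G f * (indicator {-R..R} (f b2) * abs_powr_neg r (f b2 - Im (\<gamma> f))))
        \<in> borel_measurable (PiM (insert b1 (insert b2 J)) (\<lambda>_. lborel))"
      "(\<lambda>f. Re (\<gamma> f)) \<in> borel_measurable (PiM (insert b1 (insert b2 J)) (\<lambda>_. lborel))"
      by measurable
  qed (use assms in auto)
  also have "\<dots> = (\<integral>\<^sup>+ f. (G f * K) * (indicator {-R..R} (f b2) * abs_powr_neg r (f b2 - Im (\<gamma> f)))
      \<partial>PiM (insert b2 J) (\<lambda>_. lborel))"
    by (simp add: mult_ac)
  also have "\<dots> \<le> (\<integral>\<^sup>+ f. G f * K * K \<partial>PiM J (\<lambda>_. lborel))"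
  proof (rule nn_integral_PiM_insert_abs_powr_neg_le)
    show "(\<lambda>f. G f * K) \<in> borel_measurable (PiM (insert b2 J) (\<lambda>_. lborel))"
      "(\<lambda>f. Im (\<gamma> f)) \<in> borel_measurable (PiM (insert b2 J) (\<lambda>_. lborel))"
      by measurable
  qed (use assms in auto)
  finally show ?thesis .
qed

lemma prod_indicator_norm_powr_neg_le:
  fixes a :: "'i \<Rightarrow> complex" and f :: "'i \<Rightarrow> real"
  assumes J: "finite J" "b1 \<notin> insert b2 J" "b2 \<notin> J" and a: "a b2 = \<i> * a b1" "a b1 \<noteq> 0"
    and "0 \<le> q" and \<gamma>: "\<gamma> = (c - (\<Sum>b\<in>J. complex_of_real (f b) * a b)) / a b1"
  shows "(\<Prod>b\<in>insert b1 (insert b2 J). indicator {-R..R} (f b)) *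
      ennreal (cmod (c - (\<Sum>b\<in>insert b1 (insert b2 J). complex_of_real (f b) * a b)) powr (-q))
    \<le> (ennreal (cmod (a b1) powr (-q) * 2 powr (-q/2)) * (\<Prod>b\<in>J. indicator {-R..R} (f b)) *
        (indicator {-R..R} (f b2) * abs_powr_neg (q/2) (f b2 - Im \<gamma>))) *
      (indicator {-R..R} (f b1) * abs_powr_neg (q/2) (f b1 - Re \<gamma>))"
    (is "?ind * ?lhs \<le> _")
proof -
  have "c - (\<Sum>b\<in>insert b1 (insert b2 J). complex_of_real (f b) * a b) = (- a b1) * (Complex (f b1) (f b2) - \<gamma>)"
    using J a unfolding \<gamma> by (simp add: Complex_eq field_simps)
  then have "?lhs \<le> ennreal (cmod (a b1) powr (-q) * 2 powr (-q/2)) *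
      abs_powr_neg (q/2) (f b1 - Re \<gamma>) * abs_powr_neg (q/2) (f b2 - Im \<gamma>)"
    using norm_mult_powr_neg_le_abs_powr_neg[of "- a b1" q "Complex (f b1) (f b2) - \<gamma>"] a \<open>0 \<le> q\<close> by simp
  then have "?ind * ?lhs \<le> ?ind * (ennreal (cmod (a b1) powr (-q) * 2 powr (-q/2)) *
      abs_powr_neg (q/2) (f b1 - Re \<gamma>) * abs_powr_neg (q/2) (f b2 - Im \<gamma>))"
    by (rule mult_left_mono) simp
  then show ?thesis
    using J by (simp add: mult_ac)
qed

lemma nn_integral_PiM_linear_powr_neg_finite:
  fixes B :: "'i set" and a :: "'i \<Rightarrow> complex"
  assumes B: "finite B" "b1 \<in> B" "b2 \<in> B" "b1 \<noteq> b2"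
    and a: "a b2 = \<i> * a b1" "a b1 \<noteq> 0"
    and q: "0 \<le> q" "q < 2" and R: "0 \<le> R"
  shows "(\<integral>\<^sup>+ f. (\<Prod>b\<in>B. indicator {-R..R} (f b)) *
      ennreal (cmod (c - (\<Sum>b\<in>B. complex_of_real (f b) * a b)) powr (-q)) \<partial>PiM B (\<lambda>_. lborel)) < \<infinity>"
proof -
  interpret product_sigma_finite "\<lambda>_::'i. lborel::real measure" by standard
  define r where "r = q/2"
  define J where "J = B - {b1, b2}"
  have J: "finite J" "b1 \<notin> insert b2 J" "b2 \<notin> J" and BJ: "B = insert b1 (insert b2 J)"
    using B by (auto simp: J_def)
  define ind where "ind = (\<lambda>y::real. indicator {-R..R} y :: ennreal)"
  define \<gamma> where "\<gamma> = (\<lambda>f::'i\<Rightarrow>real. (c - (\<Sum>b\<in>J. complex_of_real (f b) * a b)) / a b1)"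
  define K0 where "K0 = ennreal (cmod (a b1) powr (-q) * 2 powr (-q/2))"
  define K where "K = (\<integral>\<^sup>+ v. indicator {-1..1} v * abs_powr_neg r v \<partial>lborel) + ennreal (2 * R)"
  define P where "P = (\<lambda>f::'i\<Rightarrow>real. K0 * (\<Prod>b\<in>J. ind (f b)))"
  have [measurable]: "ind \<in> borel_measurable borel" unfolding ind_def by measurable
  have \<gamma>_m: "\<gamma> \<in> borel_measurable (PiM I (\<lambda>_. lborel))" if "J \<subseteq> I" for I
    unfolding \<gamma>_def using that
    by (intro borel_measurable_divide borel_measurable_diff borel_measurable_sum borel_measurable_times)
      (auto intro!: measurable_component_singleton)
  have P_m: "P \<in> borel_measurable (PiM I (\<lambda>_. lborel))" if "J \<subseteq> I" for I
    unfolding P_def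
  proof (intro borel_measurable_times_ennreal borel_measurable_const borel_measurable_prod_ennreal)
    fix b assume "b \<in> J"
    with that have "b \<in> I" by auto
    then show "(\<lambda>f. ind (f b)) \<in> borel_measurable (PiM I (\<lambda>_. lborel))" by measurable
  qed
  have pointwise: "(\<Prod>b\<in>B. indicator {-R..R} (f b)) *
      ennreal (cmod (c - (\<Sum>b\<in>B. complex_of_real (f b) * a b)) powr (-q))
    \<le> (P f * (ind (f b2) * abs_powr_neg r (f b2 - Im (\<gamma> f)))) *
      (ind (f b1) * abs_powr_neg r (f b1 - Re (\<gamma> f)))" for f
    unfolding BJ P_def ind_def K0_def r_def
    by (rule prod_indicator_norm_powr_neg_le) (use J a q in \<open>auto simp: \<gamma>_def\<close>)
  have "(\<integral>\<^sup>+ f. (\<Prod>b\<in>B. indicator {-R..R} (f b)) *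
      ennreal (cmod (c - (\<Sum>b\<in>B. complex_of_real (f b) * a b)) powr (-q)) \<partial>PiM B (\<lambda>_. lborel))
    \<le> (\<integral>\<^sup>+ f. (P f * (ind (f b2) * abs_powr_neg r (f b2 - Im (\<gamma> f)))) *
        (ind (f b1) * abs_powr_neg r (f b1 - Re (\<gamma> f))) \<partial>PiM (insert b1 (insert b2 J)) (\<lambda>_. lborel))"
    unfolding BJ[symmetric] by (intro nn_integral_mono pointwise)
  also have "\<dots> \<le> (\<integral>\<^sup>+ f. P f * K * K \<partial>PiM J (\<lambda>_. lborel))"
    unfolding ind_def using J q R \<gamma>_m P_m
    by (intro nn_integral_PiM_insert2_abs_powr_neg_le)
      (auto simp: r_def K_def \<gamma>_def P_def intro!: sum.cong prod.cong arg_cong2[where f = "(*)"])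
  also have "\<dots> = K0 * K * K * (\<integral>\<^sup>+ f. (\<Prod>b\<in>J. ind (f b)) \<partial>PiM J (\<lambda>_. lborel))"
    unfolding P_def by (subst nn_integral_cmult[symmetric]) (auto simp: mult_ac)
  also have "(\<integral>\<^sup>+ f. (\<Prod>b\<in>J. ind (f b)) \<partial>PiM J (\<lambda>_. lborel)) = ennreal (2 * R) ^ card J"
    using J R by (subst product_nn_integral_prod) (auto simp: ind_def)
  also have "K0 * K * K * ennreal (2 * R) ^ card J < \<infinity>"
    using nn_integral_abs_powr_neg_unit_finite[of r] q R
    by (simp add: K_def K0_def r_def ennreal_mult_less_top ennreal_power)
  finally show ?thesis .
qed

definition lin_form :: "complex^'n \<Rightarrow> complex^'n \<Rightarrow> complex" where
  "lin_form a z = (\<Sum>j\<in>UNIV. a$j * z$j)"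

lemma lin_form_sum: "lin_form a (\<Sum>b\<in>B. g b) = (\<Sum>b\<in>B. lin_form a (g b))"
  unfolding lin_form_def by (simp add: sum_distrib_left sum_component) (rule sum.swap)

lemma lin_form_scaleR: "lin_form a (x *\<^sub>R v) = complex_of_real x * lin_form a v"
  unfolding lin_form_def vector_scaleR_component by (simp add: sum_distrib_left scaleR_conv_of_real mult_ac)

lemma lin_form_diff: "lin_form a (x - y) = lin_form a x - lin_form a y"
  unfolding lin_form_def by (simp add: ring_distribs sum_subtractf)

lemma lin_form_axis: "lin_form a (axis k u) = a$k * u"
  unfolding lin_form_def by (simp add: axis_def if_distrib cong: if_cong)

lemma continuous_on_lin_form [continuous_intros]:
  "continuous_on S f \<Longrightarrow> continuous_on S (\<lambda>x. lin_form a (f x))"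
  unfolding lin_form_def by (intro continuous_intros)

lemma lin_form_powr_neg_borel_measurable:
  "(\<lambda>z. ennreal (cmod (c - lin_form a z) powr (-q))) \<in> borel_measurable borel"
proof -
  have "(\<lambda>z. c - lin_form a z) \<in> borel_measurable borel"
    by (intro borel_measurable_continuous_onI continuous_intros)
  then show ?thesis by measurable
qed

lemma nn_integral_lborel_cube_eq_PiM:
  fixes E :: "'a::euclidean_space \<Rightarrow> ennreal"
  assumes [measurable]: "E \<in> borel_measurable borel"
  shows "(\<integral>\<^sup>+ z. (\<Prod>b\<in>Basis. indicator {-R..R} (z \<bullet> b)) * E z \<partial>lborel)
    = (\<integral>\<^sup>+ f. (\<Prod>b\<in>Basis. indicator {-R..R} (f b)) * E (\<Sum>b\<in>Basis. f b *\<^sub>R b) \<partial>PiM Basis (\<lambda>_. lborel))"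
proof -
  have [measurable]: "(\<lambda>f. \<Sum>b\<in>Basis. f b *\<^sub>R (b::'a)) \<in> PiM Basis (\<lambda>_. lborel) \<rightarrow>\<^sub>M borel"
    by measurable
  have coord: "(\<Sum>b'\<in>Basis. f b' *\<^sub>R b') \<bullet> b = f b" if "b \<in> (Basis :: 'a set)" for f b
    using that by (simp add: inner_sum_left inner_Basis if_distrib cong: if_cong)
  show ?thesis
    unfolding lborel_eq[where 'a='a]
    by (subst nn_integral_distr) (auto simp: coord intro!: nn_integral_cong prod.cong)
qed

lemma nn_integral_bounded_lin_form_powr_neg_finite:
  fixes a :: "complex^'n" and S :: "(complex^'n) set"
  assumes "bounded S" "a \<noteq> 0" "0 \<le> q" "q < 2"
  shows "(\<integral>\<^sup>+ z. indicator S z * ennreal (cmod (c - lin_form a z) powr (-q)) \<partial>lborel) < \<infinity>"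
proof -
  obtain k where k: "a$k \<noteq> 0" using \<open>a \<noteq> 0\<close> by (auto simp: vec_eq_iff)
  obtain R where R: "0 \<le> R" "\<And>z. z \<in> S \<Longrightarrow> norm z \<le> R"
    using \<open>bounded S\<close> by (meson bounded_pos less_imp_le)
  define E where "E = (\<lambda>z::complex^'n. ennreal (cmod (c - lin_form a z) powr (-q)))"
  have E_m: "E \<in> borel_measurable borel"
    unfolding E_def by (rule lin_form_powr_neg_borel_measurable)
  have "(\<integral>\<^sup>+ z. indicator S z * E z \<partial>lborel)
      \<le> (\<integral>\<^sup>+ z. (\<Prod>b\<in>Basis. indicator {-R..R} (z \<bullet> b)) * E z \<partial>lborel)"
  proof (intro nn_integral_mono)
    fix z :: "complex^'n"
    have "(\<Prod>b\<in>Basis. indicator {-R..R} (z \<bullet> b) :: ennreal) = 1" if "z \<in> S"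
      using R(2)[OF that] Basis_le_norm[of _ z] by (intro prod.neutral) (force simp: indicator_def abs_le_iff)
    then show "indicator S z * E z \<le> (\<Prod>b\<in>Basis. indicator {-R..R} (z \<bullet> b)) * E z"
      by (cases "z \<in> S") auto
  qed
  also have "\<dots> = (\<integral>\<^sup>+ f. (\<Prod>b\<in>Basis. indicator {-R..R} (f b)) *
      ennreal (cmod (c - (\<Sum>b\<in>Basis. complex_of_real (f b) * lin_form a b)) powr (-q)) \<partial>PiM Basis (\<lambda>_. lborel))"
    unfolding nn_integral_lborel_cube_eq_PiM[OF E_m] by (simp add: E_def lin_form_sum lin_form_scaleR)
  also have "\<dots> < \<infinity>"
  proof (rule nn_integral_PiM_linear_powr_neg_finite)
    show "axis k 1 \<in> (Basis::(complex^'n) set)" "axis k \<i> \<in> (Basis::(complex^'n) set)"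
      by (auto simp: Basis_complex_def)
    show "axis k (1::complex) \<noteq> axis k \<i>"
      by (metis axis_nth complex_i_not_one)
    show "lin_form a (axis k \<i>) = \<i> * lin_form a (axis k 1)" "lin_form a (axis k 1) \<noteq> 0"
      using k by (auto simp: lin_form_axis)
  qed (use assms R in auto)
  finally show ?thesis unfolding E_def .
qed

section \<open>Holomorphic functions and the spaces \<open>OL\<^sup>p\<close>\<close>

lemma holo_n_compose:
  fixes G :: "complex^'n \<Rightarrow> complex"
  assumes "holo_n S G" and "\<And>z. z \<in> S \<Longrightarrow> (g has_field_derivative g' z) (at (G z))"
  shows "holo_n S (\<lambda>z. g (G z))"
  unfolding holo_n_def
proof
  fix z assume z: "z \<in> S"
  obtain A :: "complex^'n" where A: "(G has_derivative (\<lambda>h. \<Sum>j\<in>UNIV. A$j * h$j)) (at z)"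
    using assms(1) z unfolding holo_n_def by blast
  have "((\<lambda>z. g (G z)) has_derivative (\<lambda>h. g' z * (\<Sum>j\<in>UNIV. A$j * h$j))) (at z)"
    using has_derivative_compose[OF A has_field_derivative_imp_has_derivative[OF assms(2)[OF z]]] .
  then have "((\<lambda>z. g (G z)) has_derivative (\<lambda>h. \<Sum>j\<in>UNIV. (\<chi> j. g' z * A$j)$j * h$j)) (at z)"
    by (rule has_derivative_eq_rhs) (simp add: sum_distrib_left mult_ac)
  then show "\<exists>a::complex^'n. ((\<lambda>z. g (G z)) has_derivative (\<lambda>h. \<Sum>j\<in>UNIV. a$j * h$j)) (at z)" ..
qed

lemma holo_n_affine: "holo_n S (\<lambda>z. c - lin_form (a :: complex^'n) z)"
  unfolding holo_n_def
proof
  fix z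
  have "((\<lambda>z. c - lin_form a z) has_derivative (\<lambda>h. 0 - (\<Sum>j\<in>UNIV. a$j * h$j))) (at z)"
    unfolding lin_form_def
    by (intro has_derivative_diff has_derivative_const has_derivative_sum has_derivative_mult_right
        bounded_linear.has_derivative[OF bounded_linear_vec_nth] has_derivative_ident)
  then have "((\<lambda>z. c - lin_form a z) has_derivative (\<lambda>h. \<Sum>j\<in>UNIV. (- a)$j * h$j)) (at z)"
    by (rule has_derivative_eq_rhs) (simp add: sum_negf)
  then show "\<exists>b::complex^'n. ((\<lambda>z. c - lin_form a z) has_derivative (\<lambda>h. \<Sum>j\<in>UNIV. b$j * h$j)) (at z)" ..
qed

lemma holo_n_imp_continuous_on: "holo_n S G \<Longrightarrow> continuous_on S G"
  unfolding holo_n_def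
  by (blast intro: continuous_at_imp_continuous_on has_derivative_continuous)

lemma OL_if_dominated_by_lin_form_powr_neg:
  fixes h :: "complex^'n \<Rightarrow> complex"
  assumes "holo_n \<Omega> h" "open \<Omega>" "bounded \<Omega>" "a \<noteq> 0" "0 \<le> q" "q < 2" "0 \<le> C" "0 \<le> D"
    and bound: "\<And>z. z \<in> \<Omega> \<Longrightarrow> norm (h z) powr p \<le> C + D * cmod (c - lin_form a z) powr (-q)"
  shows "h \<in> OL p \<Omega>"
  unfolding OL_def set_integrable_def
proof (intro CollectI conjI integrableI_bounded \<open>holo_n \<Omega> h\<close>)
  have [measurable]: "(\<lambda>z. indicator \<Omega> z *\<^sub>R h z) \<in> borel_measurable borel"
    using assms by (intro borel_measurable_continuous_on_indicator holo_n_imp_continuous_on) auto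
  have "(\<lambda>z. norm (indicator \<Omega> z *\<^sub>R h z) powr p) \<in> borel_measurable borel" by measurable
  moreover have "(\<lambda>z. norm (indicator \<Omega> z *\<^sub>R h z) powr p) = (\<lambda>z. indicator \<Omega> z *\<^sub>R (norm (h z) powr p))"
    by (auto simp: indicator_def)
  ultimately show "(\<lambda>z. indicator \<Omega> z *\<^sub>R (norm (h z) powr p)) \<in> borel_measurable lborel"
    by simp
  have [measurable]: "\<Omega> \<in> sets borel" using \<open>open \<Omega>\<close> by auto
  define E where "E = (\<lambda>z::complex^'n. ennreal (cmod (c - lin_form a z) powr (-q)))"
  have [measurable]: "E \<in> borel_measurable borel"
    unfolding E_def by (rule lin_form_powr_neg_borel_measurable)
  have "(\<integral>\<^sup>+ z. ennreal (norm (indicator \<Omega> z *\<^sub>R (norm (h z) powr p))) \<partial>lborel)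
     \<le> (\<integral>\<^sup>+ z. ennreal C * indicator \<Omega> z + ennreal D * (indicator \<Omega> z * E z) \<partial>lborel)"
  proof (intro nn_integral_mono)
    fix z :: "complex^'n"
    show "ennreal (norm (indicator \<Omega> z *\<^sub>R (norm (h z) powr p)))
      \<le> ennreal C * indicator \<Omega> z + ennreal D * (indicator \<Omega> z * E z)"
    proof (cases "z \<in> \<Omega>")
      case True
      then have "ennreal (norm (h z) powr p) \<le> ennreal (C + D * cmod (c - lin_form a z) powr (-q))"
        using bound by (intro ennreal_leI) auto
      then show ?thesis
        using True assms by (simp add: E_def ennreal_plus[symmetric] ennreal_mult[symmetric] del: ennreal_plus)
    qed simp
  qed
  also have "\<dots> = ennreal C * emeasure lborel \<Omega> + ennreal D * (\<integral>\<^sup>+ z. indicator \<Omega> z * E z \<partial>lborel)"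
    by (subst nn_integral_add) (auto simp: nn_integral_cmult)
  also have "\<dots> < \<infinity>"
    using emeasure_bounded_finite[OF \<open>bounded \<Omega>\<close>]
      nn_integral_bounded_lin_form_powr_neg_finite[OF \<open>bounded \<Omega>\<close> \<open>a \<noteq> 0\<close> \<open>0 \<le> q\<close> \<open>q < 2\<close>, of c]
    by (simp add: E_def ennreal_mult_less_top)
  finally show "(\<integral>\<^sup>+ z. ennreal (norm (indicator \<Omega> z *\<^sub>R (norm (h z) powr p))) \<partial>lborel) < \<infinity>" .
qed

lemma abs_ln_add_powr_le:
  fixes p c M x :: real
  assumes p: "1 \<le> p" and c: "0 \<le> c" and M: "1 \<le> M" and x: "0 < x" "x \<le> M"
  shows "(\<bar>ln x\<bar> + c) powr p \<le> 2 powr p * (ln M + c) powr p + 2 powr p * p powr p * x powr (-1)"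
proof -
  define L where "L = ln M + c"
  define P where "P = p * x powr (-1/p)"
  have L: "0 \<le> L" and P: "0 < P" using M c p x by (simp_all add: L_def P_def)
  have "\<bar>ln x\<bar> \<le> ln M + P"
  proof (cases "x \<ge> 1")
    case True
    have "ln x \<le> ln M" using x by simp
    with True P show ?thesis by simp
  next
    case False
    have "ln (x powr (-1/p)) \<le> x powr (-1/p) - 1"
      using x by (intro ln_le_minus_one) simp
    then have "- ln x / p \<le> x powr (-1/p)" using x by (simp add: ln_powr)
    then have "p * (- ln x / p) \<le> p * x powr (-1/p)" using p by (intro mult_left_mono) auto
    then have "- ln x \<le> P" using p by (simp add: P_def)
    moreover have "0 \<le> ln M" using M by simp
    moreover have "ln x < 0" using False x by simp
    ultimately show ?thesis by arith
  qed
  then have "(\<bar>ln x\<bar> + c) powr p \<le> (L + P) powr p"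
    using p c by (intro powr_mono2) (auto simp: L_def)
  also have "\<dots> \<le> (2 * max L P) powr p"
    using p L P by (intro powr_mono2) auto
  also have "\<dots> = 2 powr p * max L P powr p"
    using L P by (simp add: powr_mult)
  also have "\<dots> \<le> 2 powr p * (L powr p + P powr p)"
    by (intro mult_left_mono) (auto simp: max_def)
  also have "P powr p = p powr p * x powr (-1)"
    using p x by (simp add: P_def powr_mult powr_powr)
  finally show ?thesis by (simp add: L_def algebra_simps)
qed

lemma inverse_lin_form_in_OL:
  fixes a :: "complex^'n"
  assumes "open \<Omega>" "bounded \<Omega>" "a \<noteq> 0" "\<And>z. z \<in> \<Omega> \<Longrightarrow> lin_form a z \<noteq> c" "0 \<le> p" "p < 2"
  shows "(\<lambda>z. inverse (c - lin_form a z)) \<in> OL p \<Omega>"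
proof (rule OL_if_dominated_by_lin_form_powr_neg[where C = 0 and D = 1 and q = p])
  show "holo_n \<Omega> (\<lambda>z. inverse (c - lin_form a z))"
    by (rule holo_n_compose[OF holo_n_affine], rule DERIV_inverse) (use assms(4) in auto)
qed (use assms in \<open>auto simp: norm_inverse powr_minus inverse_powr\<close>)

lemma Ln_inverse_lin_form_in_OL:
  fixes a :: "complex^'n"
  assumes "open \<Omega>" "bounded \<Omega>" "a \<noteq> 0" "\<And>z. z \<in> \<Omega> \<Longrightarrow> 0 < Re (c - lin_form a z)" "1 \<le> p"
  shows "(\<lambda>z. Ln (inverse (c - lin_form a z))) \<in> OL p \<Omega>"
proof -
  define ell where "ell z = c - lin_form a z" for z
  have ell_nz: "ell z \<noteq> 0" and Re_inverse_pos: "0 < Re (inverse (ell z))" if "z \<in> \<Omega>" for z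
    using assms(4)[OF that] by (auto simp: ell_def divide_pos_pos sum_power2_gt_zero_iff)
  have "bounded (ell ` closure \<Omega>)"
    using \<open>bounded \<Omega>\<close> unfolding ell_def
    by (intro compact_imp_bounded compact_continuous_image continuous_intros) auto
  then obtain B where "\<And>z. z \<in> closure \<Omega> \<Longrightarrow> cmod (ell z) \<le> B"
    by (auto simp: bounded_iff)
  then obtain M where M: "1 \<le> M" "\<And>z. z \<in> \<Omega> \<Longrightarrow> cmod (ell z) \<le> M"
    using closure_subset by (metis max.cobounded1 max.coboundedI2 subsetD)
  show ?thesis
    unfolding ell_def[symmetric]
  proof (rule OL_if_dominated_by_lin_form_powr_neg[where q = 1 and a = a and c = c])
    have "holo_n \<Omega> (\<lambda>z. inverse (ell z))"
      unfolding ell_def by (rule holo_n_compose[OF holo_n_affine DERIV_inverse]) (use ell_nz ell_def in auto)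
    then show "holo_n \<Omega> (\<lambda>z. Ln (inverse (ell z)))"
    proof (rule holo_n_compose)
      fix z assume "z \<in> \<Omega>"
      then have "inverse (ell z) \<notin> \<real>\<^sub>\<le>\<^sub>0"
        using Re_inverse_pos by (meson complex_nonpos_Reals_iff not_le)
      then show "(Ln has_field_derivative inverse (inverse (ell z))) (at (inverse (ell z)))"
        by (rule has_field_derivative_Ln)
    qed
  next
    fix z assume z: "z \<in> \<Omega>"
    have "norm (Ln (inverse (ell z))) \<le> \<bar>Re (Ln (inverse (ell z)))\<bar> + \<bar>Im (Ln (inverse (ell z)))\<bar>"
      by (rule cmod_le)
    also have "\<dots> \<le> \<bar>ln (cmod (ell z))\<bar> + pi"
      using Re_Ln_pos_lt_imp[OF Re_inverse_pos[OF z]] ell_nz[OF z] pi_gt_zero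
      by (simp add: norm_inverse ln_inverse)
    finally have "norm (Ln (inverse (ell z))) powr p \<le> (\<bar>ln (cmod (ell z))\<bar> + pi) powr p"
      using assms(5) by (intro powr_mono2) auto
    also have "\<dots> \<le> 2 powr p * (ln M + pi) powr p + 2 powr p * p powr p * cmod (ell z) powr (-1)"
      using abs_ln_add_powr_le[OF assms(5) _ M(1)] ell_nz[OF z] M(2)[OF z] by simp
    finally show "norm (Ln (inverse (ell z))) powr p
      \<le> 2 powr p * (ln M + pi) powr p + 2 powr p * p powr p * cmod (c - lin_form a z) powr (-1)"
      by (simp add: ell_def)
  qed (use assms M in auto)
qed

lemma not_bounded_inverse_near_zero:
  fixes g :: "'a \<Rightarrow> 'b::real_normed_div_algebra"
  assumes "0 \<in> closure (g ` S)" "0 \<notin> g ` S"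
  shows "\<not> bounded ((\<lambda>z. inverse (g z)) ` S)"
proof
  assume "bounded ((\<lambda>z. inverse (g z)) ` S)"
  then obtain B where B: "0 < B" "\<And>z. z \<in> S \<Longrightarrow> norm (inverse (g z)) \<le> B"
    by (auto simp: bounded_pos)
  have "\<forall>e>0. \<exists>z\<in>S. norm (g z) < e"
    using assms(1) by (auto simp: closure_approachable dist_norm)
  then obtain z where z: "z \<in> S" "norm (g z) < inverse B"
    using B(1) by (meson positive_imp_inverse_positive)
  moreover have "g z \<noteq> 0" using assms(2) z(1) by auto
  ultimately have "B < norm (inverse (g z))"
    using less_imp_inverse_less[OF z(2)] by (simp add: norm_inverse)
  with B(2)[OF z(1)] show False by simp
qed

lemma not_bounded_Ln_inverse_near_zero:
  fixes g :: "'a \<Rightarrow> complex"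
  assumes "0 \<in> closure (g ` S)" "0 \<notin> g ` S"
  shows "\<not> bounded ((\<lambda>z. Ln (inverse (g z))) ` S)"
proof
  assume "bounded ((\<lambda>z. Ln (inverse (g z))) ` S)"
  then obtain B where B: "\<And>z. z \<in> S \<Longrightarrow> norm (Ln (inverse (g z))) \<le> B"
    by (auto simp: bounded_iff)
  have "\<forall>e>0. \<exists>z\<in>S. norm (g z) < e"
    using assms(1) by (auto simp: closure_approachable dist_norm)
  then obtain z where z: "z \<in> S" "norm (g z) < exp (- B)"
    by (meson exp_gt_zero)
  have "g z \<noteq> 0" using assms(2) z(1) by auto
  then have "B < - ln (norm (g z))"
    using z(2) by (simp add: ln_less_cancel_iff[symmetric, of _ "exp (- B)"] del: ln_less_cancel_iff)
  also have "\<dots> = Re (Ln (inverse (g z)))"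
    using \<open>g z \<noteq> 0\<close> by (simp add: norm_inverse ln_inverse)
  also have "\<dots> \<le> norm (Ln (inverse (g z)))" by (rule complex_Re_le_cmod)
  finally show False using B[OF z(1)] by simp
qed

section \<open>The supporting half-space at a boundary point\<close>

lemma convex_frontier_derivative_nonpos:
  fixes \<rho> :: "'a::euclidean_space \<Rightarrow> real"
  assumes "convex \<Omega>" "open \<Omega>" "open U" "\<zeta> \<in> closure \<Omega>" "\<zeta> \<in> U" "0 \<le> \<rho> \<zeta>"
    and neg: "\<And>z. z \<in> \<Omega> \<inter> U \<Longrightarrow> \<rho> z < 0"
    and der: "(\<rho> has_derivative D) (at \<zeta>)" and "w \<in> \<Omega>"
  shows "D (w - \<zeta>) \<le> 0"
proof (rule ccontr)
  assume "\<not> D (w - \<zeta>) \<le> 0"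
  define v where "v = w - \<zeta>"
  have "((\<lambda>t. \<zeta> + t *\<^sub>R v) has_derivative (\<lambda>t. t *\<^sub>R v)) (at 0)"
    by (auto intro!: derivative_eq_intros)
  moreover have "(\<rho> has_derivative D) (at (\<zeta> + 0 *\<^sub>R v))" using der by simp
  ultimately have "((\<lambda>t. \<rho> (\<zeta> + t *\<^sub>R v)) has_derivative (\<lambda>t. D (t *\<^sub>R v))) (at 0)"
    by (rule has_derivative_compose)
  then have "((\<lambda>t. \<rho> (\<zeta> + t *\<^sub>R v)) has_real_derivative D v) (at 0)"
    by (rule has_derivative_imp_has_field_derivative) (simp add: linear_cmul[OF has_derivative_linear[OF der]])
  moreover have "0 < D v" using \<open>\<not> D (w - \<zeta>) \<le> 0\<close> by (simp add: v_def)
  ultimately obtain d where "d > 0" "\<forall>t>0. t < d \<longrightarrow> \<rho> (\<zeta> + 0 *\<^sub>R v) < \<rho> (\<zeta> + (0 + t) *\<^sub>R v)"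
    by (blast dest: DERIV_pos_inc_right)
  then have "\<forall>\<^sub>F t in at_right 0. \<rho> \<zeta> < \<rho> (\<zeta> + t *\<^sub>R v)"
    by (auto simp: eventually_at_right_field intro!: exI[of _ d])
  moreover have "\<forall>\<^sub>F t in at_right 0. \<zeta> + t *\<^sub>R v \<in> U"
  proof (rule topological_tendstoD[OF _ \<open>open U\<close> \<open>\<zeta> \<in> U\<close>])
    show "((\<lambda>t. \<zeta> + t *\<^sub>R v) \<longlongrightarrow> \<zeta>) (at_right 0)"
      by (rule tendsto_eq_intros refl)+ simp
  qed
  moreover have "\<forall>\<^sub>F t in at_right 0. 0 < t \<and> t \<le> (1::real)"
    by (auto simp: eventually_at_right_field intro!: exI[of _ 1])
  ultimately have "\<forall>\<^sub>F t in at_right 0. \<rho> \<zeta> < \<rho> (\<zeta> + t *\<^sub>R v) \<and> \<zeta> + t *\<^sub>R v \<in> U \<and> 0 < t \<and> t \<le> 1"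
    by eventually_elim blast
  then obtain t where t: "\<rho> \<zeta> < \<rho> (\<zeta> + t *\<^sub>R v)" "\<zeta> + t *\<^sub>R v \<in> U" "0 < t" "t \<le> 1"
    using eventually_happens'[OF trivial_limit_at_right_real] by blast
  have "\<zeta> - t *\<^sub>R (\<zeta> - w) \<in> interior \<Omega>"
    using assms t by (intro mem_interior_closure_convex_shrink) (auto simp: interior_open)
  then have "\<zeta> + t *\<^sub>R v \<in> \<Omega>"
    using \<open>open \<Omega>\<close> by (simp add: interior_open v_def algebra_simps)
  with t neg \<open>0 \<le> \<rho> \<zeta>\<close> show False by fastforce
qed

lemma linear_le_on_open_imp_less:
  fixes D :: "'a::real_normed_vector \<Rightarrow> real"
  assumes "linear D" "D u \<noteq> 0" "open S" "\<And>w. w \<in> S \<Longrightarrow> D w \<le> b" "w \<in> S"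
  shows "D w < b"
proof -
  define u' where "u' = (if D u > 0 then u else - u)"
  have u': "D u' > 0"
    using assms(1,2) by (auto simp: u'_def linear_neg)
  have "((\<lambda>t. w + t *\<^sub>R u') \<longlongrightarrow> w) (at_right 0)"
    by (rule tendsto_eq_intros refl)+ simp
  then have "\<forall>\<^sub>F t in at_right 0. w + t *\<^sub>R u' \<in> S \<and> 0 < t"
    using topological_tendstoD assms(3,5) eventually_at_right_less eventually_conj by blast
  then obtain t where t: "w + t *\<^sub>R u' \<in> S" "0 < t"
    using eventually_happens'[OF trivial_limit_at_right_real] by blast
  have "D w + t * D u' \<le> b"
    using assms(4)[OF t(1)] assms(1) by (simp add: linear_add linear_cmul)
  with t(2) u' show ?thesis by (smt (verit) mult_pos_pos)
qed

lemma convex_in_open_halfspace_at_frontier: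
  fixes \<Omega> U :: "'a::euclidean_space set" and \<rho> :: "'a \<Rightarrow> real" and D :: "'a \<Rightarrow>\<^sub>L real"
  assumes "convex \<Omega>" "open \<Omega>" "open U" "\<zeta> \<in> frontier \<Omega>" "\<zeta> \<in> U"
    and "\<Omega> \<inter> U = {z\<in>U. \<rho> z < 0}" and "(\<rho> has_derivative blinfun_apply D) (at \<zeta>)" and "D \<noteq> 0"
    and "w \<in> \<Omega>"
  shows "blinfun_apply D (w - \<zeta>) < 0"
proof -
  have "\<zeta> \<in> closure \<Omega>" "\<zeta> \<notin> \<Omega>"
    using assms(2,4) by (auto simp: frontier_def interior_open)
  moreover have "\<not> \<rho> \<zeta> < 0" "\<And>z. z \<in> \<Omega> \<inter> U \<Longrightarrow> \<rho> z < 0"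
    using \<open>\<zeta> \<notin> \<Omega>\<close> \<open>\<zeta> \<in> U\<close> assms(6) by blast+
  ultimately have nonpos: "blinfun_apply D (v - \<zeta>) \<le> 0" if "v \<in> \<Omega>" for v
    using assms(1,2,3,5,7) that by (intro convex_frontier_derivative_nonpos[where \<rho> = \<rho> and U = U]) auto
  obtain u where "blinfun_apply D u \<noteq> 0"
    using \<open>D \<noteq> 0\<close> by (metis blinfun_eqI zero_blinfun.rep_eq)
  then have "blinfun_apply D w < blinfun_apply D \<zeta>"
    using nonpos \<open>open \<Omega>\<close> \<open>w \<in> \<Omega>\<close> bounded_linear.linear[OF blinfun.bounded_linear_right]
    by (intro linear_le_on_open_imp_less[where S = \<Omega>]) (auto simp: blinfun.diff_right)
  then show ?thesis by (simp add: blinfun.diff_right)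
qed

section \<open>Wirtinger derivatives\<close>

definition wirtinger_vec :: "(complex^'n \<Rightarrow> real) \<Rightarrow> complex^'n" where
  "wirtinger_vec D = (\<chi> j. wirtinger D j)"

lemma blinfun_eq_Re_lin_form_wirtinger:
  fixes D :: "(complex^'n) \<Rightarrow>\<^sub>L real"
  shows "blinfun_apply D h = 2 * Re (lin_form (wirtinger_vec (blinfun_apply D)) h)"
proof -
  have "h = (\<Sum>j\<in>UNIV. Re (h$j) *\<^sub>R axis j 1 + Im (h$j) *\<^sub>R axis j \<i>)"
    by (simp add: vec_eq_iff sum_component axis_def if_distrib complex_eq_iff cong: if_cong)
  then have "blinfun_apply D h = blinfun_apply D (\<Sum>j\<in>UNIV. Re (h$j) *\<^sub>R axis j 1 + Im (h$j) *\<^sub>R axis j \<i>)"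
    by (rule arg_cong)
  also have "\<dots> = (\<Sum>j\<in>UNIV. Re (h$j) * blinfun_apply D (axis j 1) + Im (h$j) * blinfun_apply D (axis j \<i>))"
    by (simp add: blinfun.sum_right blinfun.add_right blinfun.scaleR_right)
  also have "\<dots> = 2 * Re (lin_form (wirtinger_vec (blinfun_apply D)) h)"
    by (simp add: lin_form_def wirtinger_vec_def wirtinger_def Re_sum sum_distrib_left algebra_simps
        add_divide_distrib)
  finally show ?thesis .
qed

lemma wirtinger_vec_nonzero:
  fixes D :: "(complex^'n) \<Rightarrow>\<^sub>L real"
  assumes "D \<noteq> 0"
  shows "wirtinger_vec (blinfun_apply D) \<noteq> 0"
proof
  assume "wirtinger_vec (blinfun_apply D) = 0"
  then have "blinfun_apply D h = 0" for h
    using blinfun_eq_Re_lin_form_wirtinger[of D h] by (simp add: lin_form_def)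
  with assms show False by (metis blinfun_eqI zero_blinfun.rep_eq)
qed

lemma f_zeta_eq_inverse:
  "f_zeta D \<zeta> z = inverse (lin_form (wirtinger_vec (blinfun_apply D)) \<zeta> - lin_form (wirtinger_vec (blinfun_apply D)) z)"
  by (simp add: f_zeta_def lin_form_def wirtinger_vec_def inverse_eq_divide sum_subtractf[symmetric]
      right_diff_distrib)

theorem mainTheorem11:
  fixes \<Omega> U :: "(complex^'n) set" and \<rho> :: "complex^'n \<Rightarrow> real"
    and \<rho>' :: "complex^'n \<Rightarrow> ((complex^'n) \<Rightarrow>\<^sub>L real)" and \<zeta> :: "complex^'n"
  assumes "bounded \<Omega>" and "open \<Omega>" and "convex \<Omega>"
    and "open U" and "frontier \<Omega> \<subseteq> U"
    and "\<forall>z\<in>U. (\<rho> has_derivative blinfun_apply (\<rho>' z)) (at z)"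
    and "continuous_on U \<rho>'"
    and "\<Omega> \<inter> U = {z\<in>U. \<rho> z < 0}"
    and "\<forall>z\<in>frontier \<Omega>. \<rho>' z \<noteq> 0"
    and "\<zeta> \<in> frontier \<Omega>"
  shows "holo_n \<Omega> (f_zeta (\<rho>' \<zeta>) \<zeta>)
    \<and> (\<forall>p. 1 \<le> p \<and> p < 2 \<longrightarrow> f_zeta (\<rho>' \<zeta>) \<zeta> \<in> OL p \<Omega>)
    \<and> f_zeta (\<rho>' \<zeta>) \<zeta> \<notin> OL_inf \<Omega>
    \<and> (\<forall>p. 1 \<le> p \<longrightarrow> (\<lambda>z. Ln (f_zeta (\<rho>' \<zeta>) \<zeta> z)) \<in> OL p \<Omega>)
    \<and> (\<lambda>z. Ln (f_zeta (\<rho>' \<zeta>) \<zeta> z)) \<notin> OL_inf \<Omega>"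
proof -
  define a where "a = wirtinger_vec (blinfun_apply (\<rho>' \<zeta>))"
  define ell where "ell z = lin_form a \<zeta> - lin_form a z" for z
  have f_zeta_eq: "f_zeta (\<rho>' \<zeta>) \<zeta> = (\<lambda>z. inverse (ell z))"
    by (simp add: fun_eq_iff f_zeta_eq_inverse a_def ell_def)
  have "a \<noteq> 0" using assms(9,10) unfolding a_def by (intro wirtinger_vec_nonzero) blast
  have Re_ell: "0 < Re (ell z)" if "z \<in> \<Omega>" for z
  proof -
    have "blinfun_apply (\<rho>' \<zeta>) (z - \<zeta>) < 0"
      using assms that by (intro convex_in_open_halfspace_at_frontier[where U = U and \<rho> = \<rho>]) auto
    then show ?thesis
      using blinfun_eq_Re_lin_form_wirtinger[of "\<rho>' \<zeta>" "\<zeta> - z"]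
      by (simp add: ell_def a_def lin_form_diff blinfun.diff_right)
  qed
  have "ell ` closure \<Omega> \<subseteq> closure (ell ` \<Omega>)"
    unfolding ell_def by (intro image_closure_subset continuous_intros) (auto intro: closure_subset[THEN subsetD])
  then have "0 \<in> closure (ell ` \<Omega>)"
    using assms(10) by (force simp: frontier_def ell_def)
  moreover have "0 \<notin> ell ` \<Omega>" using Re_ell by force
  moreover have OL_inverse: "(\<lambda>z. inverse (ell z)) \<in> OL p \<Omega>" if "0 \<le> p" "p < 2" for p
    unfolding ell_def using assms(1,2) \<open>a \<noteq> 0\<close> Re_ell that
    by (intro inverse_lin_form_in_OL) (force simp: ell_def)+
  moreover have "(\<lambda>z. Ln (inverse (ell z))) \<in> OL p \<Omega>" if "1 \<le> p" for p
    unfolding ell_def using assms(1,2) \<open>a \<noteq> 0\<close> Re_ell that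
    by (intro Ln_inverse_lin_form_in_OL) (auto simp: ell_def)
  ultimately show ?thesis
    unfolding f_zeta_eq OL_inf_def using OL_inverse[of 1]
    by (auto simp: OL_def not_bounded_inverse_near_zero not_bounded_Ln_inverse_near_zero)
qed

end
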